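(* Let $X$ be a continuum and $K\subset X$ a subcontinuum. Suppose the quotient $X/K$ is coastal at the point $K$. Then there exists $y\in X-K$ such that $\kappa(K;y)$ is dense in $X$.
   Context: A continuum is a nondegenerate compact connected Hausdorff space. $X/K$ is the quotient of $X$ obtained by collapsing $K$ to a single point, also denoted $K$. For a subcontinuum $L$ of a continuum $Z$ and a point $p$, $\kappa(L;p)$ is the union of all subcontinua $M$ of $Z$ with $L\subset M$, $M\neq Z$, $p\notin M$. $Z$ is coastal at $z$ if $\kappa(\{z\};p)$ is dense in $Z$ for some $p\neq z$. *)

theory Defs
  imports "HOL-Analysis.Analysis"
begin

definition continuum :: "'a topology \<Rightarrow> bool" where
  "continuum X \<longleftrightarrow> compact_space X \<and> connected_space X \<and> Hausdorff_space X \<and>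
     (\<exists>a\<in>topspace X. \<exists>b\<in>topspace X. a \<noteq> b)"

definition subcontinuum :: "'a topology \<Rightarrow> 'a set \<Rightarrow> bool" where
  "subcontinuum X M \<longleftrightarrow> M \<subseteq> topspace X \<and> continuum (subtopology X M)"

definition kappa :: "'a topology \<Rightarrow> 'a set \<Rightarrow> 'a \<Rightarrow> 'a set" where
  "kappa Z L p = \<Union>{M. subcontinuum Z M \<and> L \<subseteq> M \<and> M \<noteq> topspace Z \<and> p \<notin> M}"

definition coastal_at :: "'a topology \<Rightarrow> 'a \<Rightarrow> bool" where
  "coastal_at Z z \<longleftrightarrow> z \<in> topspace Z \<and>
     (\<exists>p\<in>topspace Z. p \<noteq> z \<and> Z closure_of (kappa Z {z} p) = topspace Z)"

text \<open>Quotient X/K: points are K itself and the singletons {x}, x in X - K.\<close>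
definition collapse_map :: "'a set \<Rightarrow> 'a \<Rightarrow> 'a set" where
  "collapse_map K x = (if x \<in> K then K else {x})"

lemma istopology_collapse:
  "istopology (\<lambda>U. U \<subseteq> collapse_map K ` topspace X \<and>
      openin X {x \<in> topspace X. collapse_map K x \<in> U})"
proof -
  have i: "openin X {x \<in> topspace X. collapse_map K x \<in> S \<inter> T}"
    if "openin X {x \<in> topspace X. collapse_map K x \<in> S}"
       "openin X {x \<in> topspace X. collapse_map K x \<in> T}" for S T
  proof -
    have "{x \<in> topspace X. collapse_map K x \<in> S \<inter> T} =
       {x \<in> topspace X. collapse_map K x \<in> S} \<inter> {x \<in> topspace X. collapse_map K x \<in> T}"
      by blast
    then show ?thesis using that by (metis (no_types, lifting) openin_Int)
  qed
  have u: "openin X {x \<in> topspace X. collapse_map K x \<in> \<Union>\<K>}"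
    if "\<forall>U\<in>\<K>. openin X {x \<in> topspace X. collapse_map K x \<in> U}" for \<K>
  proof -
    have "{x \<in> topspace X. collapse_map K x \<in> \<Union>\<K>} =
       \<Union>((\<lambda>U. {x \<in> topspace X. collapse_map K x \<in> U}) ` \<K>)" by blast
    then show ?thesis using that by (metis (no_types, lifting) imageE openin_Union)
  qed
  show ?thesis unfolding istopology_def
    apply (rule conjI)
     apply (intro allI impI)
     apply (elim conjE, rule conjI, blast, rule i, assumption, assumption)
    apply (intro allI impI)
    apply (rule conjI)
     apply (simp add: Sup_le_iff)
    apply (rule u, blast)
    done
qed

definition collapse_topology :: "'a topology \<Rightarrow> 'a set \<Rightarrow> 'a set topology" where
  "collapse_topology X K = topology (\<lambda>U. U \<subseteq> collapse_map K ` topspace X \<and>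
      openin X {x \<in> topspace X. collapse_map K x \<in> U})"

lemma openin_collapse_topology:
  "openin (collapse_topology X K) U \<longleftrightarrow> U \<subseteq> collapse_map K ` topspace X \<and>
      openin X {x \<in> topspace X. collapse_map K x \<in> U}"
  unfolding collapse_topology_def by (simp only: topology_inverse'[OF istopology_collapse])

end

theory Submission
  imports Defs
begin

text \<open>Collapsing K is a monotone, perfect quotient map q from X onto X/K. Hence the preimage
of a subcontinuum of X/K containing the point K is a subcontinuum of X containing K, so if
p = q y witnesses that X/K is coastal at K, then the preimage of \<open>\<kappa>({K};p)\<close> lies in
\<open>\<kappa>(K;y)\<close>. That preimage is dense: it contains K, and off K the map q is an open embedding.\<close>

lemma topspace_collapse_topology:
  "topspace (collapse_topology X K) = collapse_map K ` topspace X"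
proof (rule subset_antisym)
  show "topspace (collapse_topology X K) \<subseteq> collapse_map K ` topspace X"
    using openin_collapse_topology[of X K "topspace (collapse_topology X K)"] by simp
  have "{x \<in> topspace X. collapse_map K x \<in> collapse_map K ` topspace X} = topspace X"
    by blast
  then have "openin (collapse_topology X K) (collapse_map K ` topspace X)"
    unfolding openin_collapse_topology by simp
  then show "collapse_map K ` topspace X \<subseteq> topspace (collapse_topology X K)"
    by (rule openin_subset)
qed

lemma quotient_map_collapse_map:
  "quotient_map X (collapse_topology X K) (collapse_map K)"
  unfolding quotient_map_def topspace_collapse_topology openin_collapse_topology by auto

lemma collapse_map_preimage_image:
  assumes "S \<subseteq> topspace X" "K \<subseteq> topspace X"
  shows "{x \<in> topspace X. collapse_map K x \<in> collapse_map K ` S} =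
    (if S \<inter> K = {} then S else S \<union> K)"
  using assms by (auto simp: collapse_map_def split: if_splits)

lemma collapse_map_fibre:
  assumes "a \<in> topspace X" "K \<subseteq> topspace X"
  shows "{x \<in> topspace X. collapse_map K x = collapse_map K a} = (if a \<in> K then K else {a})"
  using collapse_map_preimage_image[of "{a}" X K] assms by auto

lemma monotone_map_collapse_map:
  assumes "connectedin X K"
  shows "monotone_map X (collapse_topology X K) (collapse_map K)"
  unfolding monotone_map_def topspace_collapse_topology
  using assms collapse_map_fibre[of _ X K] connectedin_subset_topspace[OF assms]
  by auto

lemma closed_map_collapse_map:
  assumes "closedin X K"
  shows "closed_map X (collapse_topology X K) (collapse_map K)"
  unfolding closed_map_def
proof (intro allI impI)
  fix C assume C: "closedin X C"
  have "closedin X {x \<in> topspace X. collapse_map K x \<in> collapse_map K ` C}"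
    using C assms by (simp add: collapse_map_preimage_image closedin_subset closedin_Un)
  moreover have "collapse_map K ` C \<subseteq> topspace (collapse_topology X K)"
    using C by (simp add: topspace_collapse_topology closedin_subset image_mono)
  ultimately show "closedin (collapse_topology X K) (collapse_map K ` C)"
    using quotient_map_collapse_map[of X K] unfolding quotient_map_closedin by blast
qed

lemma proper_map_collapse_map:
  assumes "compactin X K" "closedin X K"
  shows "proper_map X (collapse_topology X K) (collapse_map K)"
  unfolding proper_map_def topspace_collapse_topology
  using closed_map_collapse_map[OF assms(2)] collapse_map_fibre[OF _ closedin_subset[OF assms(2)]]
    assms(1)
  by auto

lemma Hausdorff_space_collapse_topology:
  assumes "normal_space X" "Hausdorff_space X" "closedin X K"
  shows "Hausdorff_space (collapse_topology X K)"
  using normal_Hausdorff_space_closed_continuous_map_image[OF assms(1,2)]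
    closed_map_collapse_map[OF assms(3)]
    quotient_imp_continuous_map[OF quotient_map_collapse_map] topspace_collapse_topology
  by blast

lemma subcontinuum_imp_compactin: "subcontinuum X K \<Longrightarrow> compactin X K"
  by (simp add: subcontinuum_def continuum_def compactin_subspace)

lemma subcontinuum_imp_connectedin: "subcontinuum X K \<Longrightarrow> connectedin X K"
  by (simp add: subcontinuum_def continuum_def connectedin_def)

lemma subcontinuum_imp_closedin:
  "\<lbrakk>Hausdorff_space X; subcontinuum X K\<rbrakk> \<Longrightarrow> closedin X K"
  by (simp add: compactin_imp_closedin subcontinuum_imp_compactin)

lemma subcontinuum_collapse_preimage:
  assumes X: "continuum X" and K: "subcontinuum X K"
    and M: "subcontinuum (collapse_topology X K) M" "K \<in> M"
  shows "subcontinuum X {x \<in> topspace X. collapse_map K x \<in> M}"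
proof -
  let ?Q = "collapse_topology X K" and ?P = "{x \<in> topspace X. collapse_map K x \<in> M}"
  have HX: "Hausdorff_space X" and CX: "compact_space X"
    using X by (auto simp: continuum_def)
  have Kclosed: "closedin X K"
    using HX K by (rule subcontinuum_imp_closedin)
  have "Hausdorff_space ?Q"
    using compact_Hausdorff_or_regular_imp_normal_space CX HX Kclosed
    by (blast intro: Hausdorff_space_collapse_topology)
  then have "closedin ?Q M"
    using M(1) by (simp add: compactin_imp_closedin subcontinuum_imp_compactin)
  have compact: "compactin X ?P"
    using proper_map_collapse_map[OF subcontinuum_imp_compactin[OF K] Kclosed]
      subcontinuum_imp_compactin[OF M(1)]
    by (rule compactin_proper_map_preimage)
  have connected: "connectedin X ?P"
  proof (rule connectedin_monotone_quotient_map_preimage)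
    show "monotone_map X ?Q (collapse_map K)"
      using K by (simp add: monotone_map_collapse_map subcontinuum_imp_connectedin)
    show "quotient_map X ?Q (collapse_map K)"
      by (rule quotient_map_collapse_map)
    show "connectedin ?Q M"
      using M(1) by (rule subcontinuum_imp_connectedin)
    show "openin ?Q M \<or> closedin ?Q M"
      using \<open>closedin ?Q M\<close> ..
  qed
  have "K \<subseteq> ?P"
    using K M(2) by (auto simp: subcontinuum_def collapse_map_def)
  moreover obtain a b where "a \<in> K" "b \<in> K" "a \<noteq> b"
    using K by (auto simp: subcontinuum_def continuum_def)
  ultimately have nondegenerate:
    "\<exists>a\<in>topspace (subtopology X ?P). \<exists>b\<in>topspace (subtopology X ?P). a \<noteq> b"
    by auto
  show ?thesis
    unfolding subcontinuum_def continuum_def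
    using compact connected nondegenerate Hausdorff_space_subtopology[OF HX]
    by (simp add: compactin_subspace connectedin_def)
qed

lemma subset_kappa_if_dense:
  assumes "Z closure_of kappa Z L p = topspace Z" "topspace Z \<noteq> {}"
  shows "L \<subseteq> kappa Z L p"
proof -
  have "kappa Z L p \<noteq> {}"
    using assms by force
  then show ?thesis
    unfolding kappa_def by auto
qed

lemma collapse_preimage_kappa_subset:
  assumes "continuum X" "subcontinuum X K" "y \<in> topspace X"
  shows "{x \<in> topspace X. collapse_map K x \<in> kappa (collapse_topology X K) {K} (collapse_map K y)}
    \<subseteq> kappa X K y"
proof
  fix x
  assume "x \<in> {x \<in> topspace X. collapse_map K x \<in> kappa (collapse_topology X K) {K} (collapse_map K y)}"
  then obtain M where M: "subcontinuum (collapse_topology X K) M" "K \<in> M" "collapse_map K y \<notin> M"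
    and x: "x \<in> topspace X" "collapse_map K x \<in> M"
    by (auto simp: kappa_def)
  let ?P = "{x \<in> topspace X. collapse_map K x \<in> M}"
  have "subcontinuum X ?P"
    using assms(1,2) M(1,2) by (rule subcontinuum_collapse_preimage)
  moreover have "K \<subseteq> ?P"
    using assms(2) M(2) by (auto simp: subcontinuum_def collapse_map_def)
  moreover have "y \<notin> ?P" "?P \<noteq> topspace X"
    using M(3) assms(3) by auto
  ultimately have "?P \<in> {N. subcontinuum X N \<and> K \<subseteq> N \<and> N \<noteq> topspace X \<and> y \<notin> N}"
    by blast
  then show "x \<in> kappa X K y"
    unfolding kappa_def by (rule UnionI) (use x in simp)
qed

lemma openin_collapse_image:
  assumes "openin X U" "U \<inter> K = {}" "K \<subseteq> topspace X"
  shows "openin (collapse_topology X K) (collapse_map K ` U)"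
proof -
  have "{x \<in> topspace X. collapse_map K x \<in> collapse_map K ` U} = U"
    using collapse_map_preimage_image[OF openin_subset[OF assms(1)] assms(3)] assms(2) by simp
  then show ?thesis
    unfolding openin_collapse_topology using assms(1) by (simp add: image_mono openin_subset)
qed

lemma dense_collapse_preimage:
  assumes K: "closedin X K"
    and S: "collapse_topology X K closure_of S = topspace (collapse_topology X K)" "K \<in> S"
  shows "X closure_of {x \<in> topspace X. collapse_map K x \<in> S} = topspace X"
proof (rule subset_antisym[OF closure_of_subset_topspace subsetI])
  let ?Q = "collapse_topology X K" and ?P = "{x \<in> topspace X. collapse_map K x \<in> S}"
  fix x assume x: "x \<in> topspace X"
  show "x \<in> X closure_of ?P"
  proof (cases "x \<in> K")
    case True
    then have "x \<in> ?P"
      using x S(2) by (simp add: collapse_map_def)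
    then show ?thesis
      using closure_of_subset[of ?P X] by blast
  next
    case False
    have "\<exists>t. t \<in> ?P \<and> t \<in> T" if T: "x \<in> T" "openin X T" for T
    proof -
      have "openin X (T - K)"
        using T(2) K by (rule openin_diff)
      then have "openin ?Q (collapse_map K ` (T - K))"
        by (rule openin_collapse_image) (use closedin_subset[OF K] in auto)
      moreover have "collapse_map K x \<in> collapse_map K ` (T - K)"
        using T(1) False by blast
      moreover have "collapse_map K x \<in> ?Q closure_of S"
        using S(1) x by (simp add: topspace_collapse_topology)
      ultimately obtain m where "m \<in> S" "m \<in> collapse_map K ` (T - K)"
        by (meson in_closure_of)
      then obtain t where "t \<in> T - K" "collapse_map K t \<in> S"
        by blast
      then show ?thesis
        using openin_subset[OF T(2)] by blast
    qed
    then show ?thesis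
      using x unfolding in_closure_of by blast
  qed
qed

theorem mainTheorem14:
  fixes X :: "'a topology" and K :: "'a set"
  assumes "continuum X"
    and "subcontinuum X K"
    and "coastal_at (collapse_topology X K) K"
  shows "\<exists>y\<in>topspace X - K. X closure_of (kappa X K y) = topspace X"
proof -
  let ?Q = "collapse_topology X K"
  obtain p where p: "p \<in> topspace ?Q" "p \<noteq> K"
    and dense: "?Q closure_of kappa ?Q {K} p = topspace ?Q" and "K \<in> topspace ?Q"
    using assms(3) unfolding coastal_at_def by blast
  obtain y where y: "y \<in> topspace X" "p = collapse_map K y"
    using p(1) unfolding topspace_collapse_topology by blast
  have "y \<notin> K"
    using y(2) p(2) by (auto simp: collapse_map_def)
  have "closedin X K"
    using assms(1) subcontinuum_imp_closedin[OF _ assms(2)] by (simp add: continuum_def)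
  moreover have "K \<in> kappa ?Q {K} p"
    using subset_kappa_if_dense[OF dense] \<open>K \<in> topspace ?Q\<close> by blast
  ultimately have "X closure_of {x \<in> topspace X. collapse_map K x \<in> kappa ?Q {K} p} = topspace X"
    by (intro dense_collapse_preimage dense)
  moreover have "{x \<in> topspace X. collapse_map K x \<in> kappa ?Q {K} p} \<subseteq> kappa X K y"
    using collapse_preimage_kappa_subset[OF assms(1,2) y(1)] y(2) by simp
  ultimately have "topspace X \<subseteq> X closure_of kappa X K y"
    by (metis closure_of_mono)
  then have "X closure_of kappa X K y = topspace X"
    by (intro subset_antisym closure_of_subset_topspace)
  then show ?thesis
    using y(1) \<open>y \<notin> K\<close> by blast
qed

end
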